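(* Let $\approx$ be an equinumerosity on $\mathbb W$. For finite sets $A,B\in\mathbb W$ we have $A\approx B$ if and only if $|A|=|B|$. Moreover, if $X\in\mathbb W$ is infinite and $A\in\mathbb W$ is finite, then $X\succ A$.
   Context: Let $\mathbb N=\{0,1,2,\dots\}$. Let $\mathbb{W}$ be the family of finitary point sets: sets $A\subseteq\bigcup_{k\ge1}\mathbb N^k$ of finite tuples of natural numbers (tuples of different lengths allowed) such that for every $n\in\mathbb N$ there is $h$ with $A\cap\{0,\dots,n\}^k=\emptyset$ for all $k>h$. Cartesian products are identified with concatenations: $A\times B=\{(a_1,\dots,a_k,b_1,\dots,b_h):(a_1,\dots,a_k)\in A,\ (b_1,\dots,b_h)\in B\}$; $\{n\}$ denotes the set whose only element is the 1-tuple $(n)$. $A,B\in\mathbb W$ are multipliable if distinct pairs $(a,b)\in A\times B$ have distinct concatenations. Given an equivalence relation $\approx$ on $\mathbb W$, write $A\succ B$, equivalently $B\prec A$, if there exist $A',B'\in\mathbb W$ with $B'\subsetneq A'$, $A\approx A'$ and $B\approx B'$. An equinumerosity is an equivalence relation $\approx$ on $\mathbb W$ such that for all $A,B\in\mathbb W$: (AP) $A\approx B$ iff $A\setminus B\approx B\setminus A$; (ZP) exactly one of $A\approx B$, $A\succ B$, $A\prec B$ holds; (TP) if $T$ is injective on $A$ and $T(a)$ is a permutation of the coordinates of $a$ for every $a\in A$, then $A\approx T[A]$; (UP) $A\times\{n\}\approx A$ for all $n\in\mathbb N$; (PP) if $A,B$ are multipliable, $A',B'$ are multipliable, $A\approx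 A'$ and $B\approx B'$, then $A\times B\approx A'\times B'$. *)

theory Defs
  imports "HOL-Library.Multiset"
begin

text \<open>Tuples of natural numbers of length k \<ge> 1 are represented as nonempty lists.\<close>

definition finitary :: "nat list set \<Rightarrow> bool" where
  "finitary A \<longleftrightarrow> (\<forall>a\<in>A. a \<noteq> []) \<and>
     (\<forall>n::nat. \<exists>h::nat. \<forall>a\<in>A. set a \<subseteq> {0..n} \<longrightarrow> length a \<le> h)"

definition WW :: "nat list set set" where
  "WW = {A. finitary A}"

definition cprod :: "nat list set \<Rightarrow> nat list set \<Rightarrow> nat list set" where
  "cprod A B = {a @ b | a b. a \<in> A \<and> b \<in> B}"

definition sing :: "nat \<Rightarrow> nat list set" where
  "sing n = {[n]}"

definition multipliable :: "nat list set \<Rightarrow> nat list set \<Rightarrow> bool" where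
  "multipliable A B \<longleftrightarrow>
     (\<forall>a\<in>A. \<forall>a'\<in>A. \<forall>b\<in>B. \<forall>b'\<in>B. a @ b = a' @ b' \<longrightarrow> a = a' \<and> b = b')"

definition eq_greater :: "(nat list set \<Rightarrow> nat list set \<Rightarrow> bool)
    \<Rightarrow> nat list set \<Rightarrow> nat list set \<Rightarrow> bool" where
  "eq_greater R A B \<longleftrightarrow>
     (\<exists>A'\<in>WW. \<exists>B'\<in>WW. B' \<subset> A' \<and> R A A' \<and> R B B')"

definition equinumerosity :: "(nat list set \<Rightarrow> nat list set \<Rightarrow> bool) \<Rightarrow> bool" where
  "equinumerosity R \<longleftrightarrow>
     \<comment> \<open>equivalence relation on WW\<close>
     (\<forall>A\<in>WW. R A A) \<and>
     (\<forall>A\<in>WW. \<forall>B\<in>WW. R A B \<longrightarrow> R B A) \<and>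
     (\<forall>A\<in>WW. \<forall>B\<in>WW. \<forall>C\<in>WW. R A B \<longrightarrow> R B C \<longrightarrow> R A C) \<and>
     \<comment> \<open>(AP)\<close>
     (\<forall>A\<in>WW. \<forall>B\<in>WW. R A B \<longleftrightarrow> R (A - B) (B - A)) \<and>
     \<comment> \<open>(ZP)\<close>
     (\<forall>A\<in>WW. \<forall>B\<in>WW.
        (R A B \<and> \<not> eq_greater R A B \<and> \<not> eq_greater R B A) \<or>
        (\<not> R A B \<and> eq_greater R A B \<and> \<not> eq_greater R B A) \<or>
        (\<not> R A B \<and> \<not> eq_greater R A B \<and> eq_greater R B A)) \<and>
     \<comment> \<open>(TP)\<close>
     (\<forall>A\<in>WW. \<forall>T. inj_on T A \<longrightarrow> (\<forall>a\<in>A. mset (T a) = mset a) \<longrightarrow> R A (T ` A)) \<and>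
     \<comment> \<open>(UP)\<close>
     (\<forall>A\<in>WW. \<forall>n. R (cprod A (sing n)) A) \<and>
     \<comment> \<open>(PP)\<close>
     (\<forall>A\<in>WW. \<forall>B\<in>WW. \<forall>A'\<in>WW. \<forall>B'\<in>WW.
        multipliable A B \<longrightarrow> multipliable A' B' \<longrightarrow> R A A' \<longrightarrow> R B B' \<longrightarrow>
        R (cprod A B) (cprod A' B'))"

end

theory Submission
  imports Defs
begin

text \<open>
  A finite set is determined up to \<open>\<approx>\<close> by its cardinality: (UP) and (TP) make every
  singleton \<open>{a}\<close> equinumerous to \<open>{[n]}\<close> for any \<open>n\<close>, so any two singletons are
  equinumerous, and (AP) then allows exchanging one element at a time, which connects
  any two finite sets of equal size. Conversely, if \<open>|A| < |B|\<close> then \<open>A\<close> is equinumerous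
  to a proper subset of \<open>B\<close>, so \<open>B \<succ> A\<close> and (ZP) excludes \<open>A \<approx> B\<close>. An infinite set
  contains proper finite subsets of every size, which gives the second claim.
\<close>

lemma WW_subset: "B \<in> WW \<Longrightarrow> A \<subseteq> B \<Longrightarrow> A \<in> WW"
  unfolding WW_def finitary_def by (simp add: subset_iff) meson

lemma finite_in_WW: "finite A \<Longrightarrow> [] \<notin> A \<Longrightarrow> A \<in> WW"
  unfolding WW_def finitary_def by (auto intro!: exI[of _ "Max (length ` A)"])

lemma singleton_in_WW: "a \<noteq> [] \<Longrightarrow> {a} \<in> WW"
  by (rule finite_in_WW) auto

lemma Nil_notin_WW: "A \<in> WW \<Longrightarrow> [] \<notin> A"
  unfolding WW_def finitary_def by auto

locale equinumerosity_rel =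
  fixes R :: "nat list set \<Rightarrow> nat list set \<Rightarrow> bool"
  assumes equinumerosity: "equinumerosity R"
begin

lemma equinumerosity_clauses:
  "\<forall>A\<in>WW. R A A"
  "\<forall>A\<in>WW. \<forall>B\<in>WW. R A B \<longrightarrow> R B A"
  "\<forall>A\<in>WW. \<forall>B\<in>WW. \<forall>C\<in>WW. R A B \<longrightarrow> R B C \<longrightarrow> R A C"
  "\<forall>A\<in>WW. \<forall>B\<in>WW. R A B \<longleftrightarrow> R (A - B) (B - A)"
  "\<forall>A\<in>WW. \<forall>B\<in>WW.
      (R A B \<and> \<not> eq_greater R A B \<and> \<not> eq_greater R B A) \<or>
      (\<not> R A B \<and> eq_greater R A B \<and> \<not> eq_greater R B A) \<or>
      (\<not> R A B \<and> \<not> eq_greater R A B \<and> eq_greater R B A)"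
  "\<forall>A\<in>WW. \<forall>T. inj_on T A \<longrightarrow> (\<forall>a\<in>A. mset (T a) = mset a) \<longrightarrow> R A (T ` A)"
  "\<forall>A\<in>WW. \<forall>n. R (cprod A (sing n)) A"
  by (insert equinumerosity[unfolded equinumerosity_def]) (elim conjE, assumption)+

lemma refl: "A \<in> WW \<Longrightarrow> R A A"
  using equinumerosity_clauses(1) by blast

lemma sym: "A \<in> WW \<Longrightarrow> B \<in> WW \<Longrightarrow> R A B \<Longrightarrow> R B A"
  using equinumerosity_clauses(2) by blast

lemma trans: "A \<in> WW \<Longrightarrow> B \<in> WW \<Longrightarrow> C \<in> WW \<Longrightarrow> R A B \<Longrightarrow> R B C \<Longrightarrow> R A C"
  using equinumerosity_clauses(3) by blast

lemma eq_iff_diff_eq: "A \<in> WW \<Longrightarrow> B \<in> WW \<Longrightarrow> R A B \<longleftrightarrow> R (A - B) (B - A)"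
  using equinumerosity_clauses(4) by blast

lemma not_eq_if_greater: "A \<in> WW \<Longrightarrow> B \<in> WW \<Longrightarrow> eq_greater R B A \<Longrightarrow> \<not> R A B"
  using equinumerosity_clauses(5) by blast

lemma eq_permute_image:
  "A \<in> WW \<Longrightarrow> inj_on T A \<Longrightarrow> (\<And>a. a \<in> A \<Longrightarrow> mset (T a) = mset a) \<Longrightarrow> R A (T ` A)"
  using equinumerosity_clauses(6) by blast

lemma eq_cprod_sing: "A \<in> WW \<Longrightarrow> R (cprod A (sing n)) A"
  using equinumerosity_clauses(7) by blast

lemma trans_singletons:
  "a \<noteq> [] \<Longrightarrow> b \<noteq> [] \<Longrightarrow> c \<noteq> [] \<Longrightarrow> R {a} {b} \<Longrightarrow> R {b} {c} \<Longrightarrow> R {a} {c}"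
  by (rule trans) (auto intro: singleton_in_WW)

lemma sym_singletons: "a \<noteq> [] \<Longrightarrow> b \<noteq> [] \<Longrightarrow> R {a} {b} \<Longrightarrow> R {b} {a}"
  by (rule sym) (auto intro: singleton_in_WW)

lemma eq_snoc_singleton: "xs \<noteq> [] \<Longrightarrow> R {xs @ [n]} {xs}"
  using eq_cprod_sing[OF singleton_in_WW, of xs n] by (simp add: cprod_def sing_def)

lemma eq_singleton_hd: "xs \<noteq> [] \<Longrightarrow> R {xs} {[hd xs]}"
proof (induction xs rule: rev_induct)
  case (snoc x xs)
  show ?case
  proof (cases "xs = []")
    case True
    then show ?thesis using refl[OF singleton_in_WW[of "[x]"]] by simp
  next
    case False
    have "R {xs @ [x]} {[hd xs]}"
      using trans_singletons[OF _ False _ eq_snoc_singleton[OF False] snoc.IH[OF False]] by simp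
    then show ?thesis using False by simp
  qed
qed simp

lemma eq_singleton_nat: "R {[n]} {[m]}"
proof -
  have "R {[n]} {[n, m]}"
    using sym_singletons[OF _ _ eq_snoc_singleton[of "[n]" m]] by simp
  moreover have "R {[n, m]} {[m, n]}"
    using eq_permute_image[OF singleton_in_WW, of "[n, m]" "\<lambda>_. [m, n]"] by simp
  moreover have "R {[m, n]} {[m]}"
    using eq_snoc_singleton[of "[m]" n] by simp
  ultimately show ?thesis
    using trans_singletons[of "[n]" "[n, m]" "[m, n]"] trans_singletons[of "[n]" "[m, n]" "[m]"]
    by simp
qed

lemma eq_singletons:
  assumes "a \<noteq> []" "b \<noteq> []"
  shows "R {a} {b}"
proof -
  have "R {a} {[hd b]}"
    using trans_singletons[OF assms(1) _ _ eq_singleton_hd[OF assms(1)] eq_singleton_nat] by simp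
  moreover have "R {[hd b]} {b}"
    using sym_singletons[OF assms(2) _ eq_singleton_hd[OF assms(2)]] by simp
  ultimately show ?thesis using trans_singletons[OF assms(1) _ assms(2), of "[hd b]"] by simp
qed

lemma eq_exchange:
  assumes "insert a C \<in> WW" "insert b C \<in> WW" "a \<notin> C" "b \<notin> C" "a \<noteq> b"
  shows "R (insert a C) (insert b C)"
proof -
  have "insert a C - insert b C = {a}" "insert b C - insert a C = {b}"
    using assms by auto
  moreover have "R {a} {b}"
    using Nil_notin_WW[OF assms(1)] Nil_notin_WW[OF assms(2)] by (auto intro: eq_singletons)
  ultimately show ?thesis using eq_iff_diff_eq[OF assms(1,2)] by simp
qed

lemma eq_if_card_eq:
  assumes "A \<in> WW" "B \<in> WW" "finite A" "finite B" "card A = card B"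
  shows "R A B"
  using assms
proof (induction "card (A - B)" arbitrary: A)
  case 0
  then have "A = B" by (metis Diff_eq_empty_iff card_0_eq card_subset_eq finite_Diff)
  then show ?case using "0.prems" refl by simp
next
  case (Suc n)
  then obtain a where a: "a \<in> A" "a \<notin> B" by (metis Diff_iff card.empty ex_in_conv nat.distinct(1))
  with Suc.prems obtain b where b: "b \<in> B" "b \<notin> A"
    by (metis card_subset_eq subsetI)
  define A' where "A' = insert b (A - {a})"
  have A': "A' \<in> WW" "finite A'" "card A' = card B"
    using Suc.prems a b Nil_notin_WW[of A] Nil_notin_WW[of B] card_gt_0_iff[of A]
    by (auto simp: A'_def intro!: finite_in_WW)
  have "A' - B = (A - B) - {a}" using b by (auto simp: A'_def)
  then have "n = card (A' - B)" using Suc.hyps(2) Suc.prems(3) a by simp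
  then have "R A' B" using Suc.hyps(1) Suc.prems(2,4) A' by blast
  moreover have "R A A'"
    using eq_exchange[of a "A - {a}" b] A'(1) Suc.prems(1) a b
    unfolding A'_def by (metis Diff_iff insert_Diff singletonI)
  ultimately show ?case using trans Suc.prems(1,2) A'(1) by blast
qed

lemma greater_if_proper_subset_card:
  assumes "X \<in> WW" "A \<in> WW" "finite A" "C \<subset> X" "finite C" "card C = card A"
  shows "eq_greater R X A"
proof -
  have "C \<in> WW" using assms WW_subset by blast
  then show ?thesis
    unfolding eq_greater_def
    using assms refl eq_if_card_eq[of A C] by auto
qed

lemma greater_if_card_less:
  assumes "A \<in> WW" "B \<in> WW" "finite A" "finite B" "card A < card B"
  shows "eq_greater R B A"
proof -
  obtain C where "C \<subseteq> B" "card C = card A"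
    using assms(5) by (meson less_imp_le obtain_subset_with_card_n)
  with assms show ?thesis
    by (metis greater_if_proper_subset_card finite_subset order_less_irrefl psubsetI)
qed

lemma card_eq_if_eq:
  assumes "A \<in> WW" "B \<in> WW" "finite A" "finite B" "R A B"
  shows "card A = card B"
proof (rule linorder_cases[of "card A" "card B"])
  assume "card A < card B"
  then show ?thesis using assms greater_if_card_less not_eq_if_greater by blast
next
  assume "card B < card A"
  then show ?thesis using assms greater_if_card_less not_eq_if_greater sym by blast
qed

lemma infinite_greater_finite:
  assumes "X \<in> WW" "A \<in> WW" "infinite X" "finite A"
  shows "eq_greater R X A"
proof -
  obtain C where "C \<subseteq> X" "finite C" "card C = card A"
    using infinite_arbitrarily_large[OF assms(3)] by blast
  with assms show ?thesis by (metis greater_if_proper_subset_card psubsetI)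
qed

end

theorem proposition1p8:
  fixes R :: "nat list set \<Rightarrow> nat list set \<Rightarrow> bool"
  assumes "equinumerosity R"
  shows "(\<forall>A\<in>WW. \<forall>B\<in>WW. finite A \<longrightarrow> finite B \<longrightarrow> (R A B \<longleftrightarrow> card A = card B))
    \<and> (\<forall>X\<in>WW. \<forall>A\<in>WW. infinite X \<longrightarrow> finite A \<longrightarrow> eq_greater R X A)"
proof -
  interpret equinumerosity_rel R using assms by unfold_locales
  show ?thesis using eq_if_card_eq card_eq_if_eq infinite_greater_finite by blast
qed

end
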